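(* Let $\tau : 2^{\mathit{Trace}_S} \to 2^{\mathit{Trace}_T}$ and $\sigma : 2^{\mathit{Trace}_T} \to 2^{\mathit{Trace}_S}$ form a Galois connection between the posets $(2^{\mathit{Trace}_S},\subseteq)$ and $(2^{\mathit{Trace}_T},\subseteq)$, with $\tau$ the lower adjoint and $\sigma$ the upper adjoint, i.e. for all $\pi_S \subseteq \mathit{Trace}_S$ and $\pi_T \subseteq \mathit{Trace}_T$: $\tau(\pi_S) \subseteq \pi_T \iff \pi_S \subseteq \sigma(\pi_T)$. Then, for any compilation chain, $\mathit{TP}^{\tau}$ holds if and only if $\mathit{TP}^{\sigma}$ holds, where $\mathit{TP}^{\tau} \equiv \forall \pi_S \subseteq \mathit{Trace}_S.\ \forall W.\ W \models \pi_S \Rightarrow W{\downarrow} \models \tau(\pi_S)$ and $\mathit{TP}^{\sigma} \equiv \forall \pi_T \subseteq \mathit{Trace}_T.\ \forall W.\ W \models \sigma(\pi_T) \Rightarrow W{\downarrow} \models \pi_T$.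
   Context: A compilation chain consists of a set of source (whole) programs $W$, a set of target programs, a set $\mathit{Trace}_S$ of source traces and a set $\mathit{Trace}_T$ of target traces, a source semantics relation $W \rightsquigarrow s$ (program $W$ can produce trace $s$), a target semantics relation of the same kind, and a compiler mapping each source program $W$ to a target program $W{\downarrow}$. A trace property is a set of traces; a (source or target) program $W$ satisfies a property $\pi$, written $W \models \pi$, iff every trace that $W$ produces belongs to $\pi$. *)

theory Defs
  imports Main
begin

text \<open>A compilation chain: source semantics semS (W produces s), target semantics semT,
and compiler cmp. Trace sets are types 'ts and 'tt; properties are sets of traces.\<close>

definition sat :: "('p \<Rightarrow> 't \<Rightarrow> bool) \<Rightarrow> 'p \<Rightarrow> 't set \<Rightarrow> bool" where
  "sat sem W \<pi> \<longleftrightarrow> (\<forall>t. sem W t \<longrightarrow> t \<in> \<pi>)"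

definition galois_connection :: "('ts set \<Rightarrow> 'tt set) \<Rightarrow> ('tt set \<Rightarrow> 'ts set) \<Rightarrow> bool" where
  "galois_connection \<tau> \<sigma> \<longleftrightarrow> (\<forall>\<pi>S \<pi>T. \<tau> \<pi>S \<subseteq> \<pi>T \<longleftrightarrow> \<pi>S \<subseteq> \<sigma> \<pi>T)"

definition TP_tau ::
  "('ws \<Rightarrow> 'ts \<Rightarrow> bool) \<Rightarrow> ('wt \<Rightarrow> 'tt \<Rightarrow> bool) \<Rightarrow> ('ws \<Rightarrow> 'wt) \<Rightarrow> ('ts set \<Rightarrow> 'tt set) \<Rightarrow> bool" where
  "TP_tau semS semT cmp \<tau> \<longleftrightarrow>
     (\<forall>\<pi>S W. sat semS W \<pi>S \<longrightarrow> sat semT (cmp W) (\<tau> \<pi>S))"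

definition TP_sigma ::
  "('ws \<Rightarrow> 'ts \<Rightarrow> bool) \<Rightarrow> ('wt \<Rightarrow> 'tt \<Rightarrow> bool) \<Rightarrow> ('ws \<Rightarrow> 'wt) \<Rightarrow> ('tt set \<Rightarrow> 'ts set) \<Rightarrow> bool" where
  "TP_sigma semS semT cmp \<sigma> \<longleftrightarrow>
     (\<forall>\<pi>T W. sat semS W (\<sigma> \<pi>T) \<longrightarrow> sat semT (cmp W) \<pi>T)"

end

theory Submission
  imports Defs
begin

text \<open>Each criterion is obtained from the other by instantiating it at a property of the
form \<open>\<sigma> \<pi>T\<close> or \<open>\<tau> \<pi>S\<close> and then moving along the counit \<open>\<tau> (\<sigma> \<pi>T) \<subseteq> \<pi>T\<close> or the unit
\<open>\<pi>S \<subseteq> \<sigma> (\<tau> \<pi>S)\<close> of the Galois connection, since satisfaction is monotone in the property.\<close>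

lemma galois_connection_counit:
  assumes "galois_connection \<tau> \<sigma>"
  shows "\<tau> (\<sigma> \<pi>T) \<subseteq> \<pi>T"
  using assms unfolding galois_connection_def by blast

lemma galois_connection_unit:
  assumes "galois_connection \<tau> \<sigma>"
  shows "\<pi>S \<subseteq> \<sigma> (\<tau> \<pi>S)"
  using assms unfolding galois_connection_def by blast

lemma sat_mono:
  assumes "sat sem W \<pi>" and "\<pi> \<subseteq> \<pi>'"
  shows "sat sem W \<pi>'"
  using assms unfolding sat_def by blast

lemma TP_tau_imp_TP_sigma:
  assumes "galois_connection \<tau> \<sigma>" and "TP_tau semS semT cmp \<tau>"
  shows "TP_sigma semS semT cmp \<sigma>"
  unfolding TP_sigma_def
proof (intro allI impI)
  fix \<pi>T W
  assume "sat semS W (\<sigma> \<pi>T)"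
  with assms(2) have "sat semT (cmp W) (\<tau> (\<sigma> \<pi>T))"
    unfolding TP_tau_def by blast
  then show "sat semT (cmp W) \<pi>T"
    using galois_connection_counit[OF assms(1)] by (rule sat_mono)
qed

lemma TP_sigma_imp_TP_tau:
  assumes "galois_connection \<tau> \<sigma>" and "TP_sigma semS semT cmp \<sigma>"
  shows "TP_tau semS semT cmp \<tau>"
  unfolding TP_tau_def
proof (intro allI impI)
  fix \<pi>S W
  assume "sat semS W \<pi>S"
  then have "sat semS W (\<sigma> (\<tau> \<pi>S))"
    using galois_connection_unit[OF assms(1)] by (rule sat_mono)
  with assms(2) show "sat semT (cmp W) (\<tau> \<pi>S)"
    unfolding TP_sigma_def by blast
qed

theorem theorem2p4:
  fixes semS :: "'ws \<Rightarrow> 'ts \<Rightarrow> bool" and semT :: "'wt \<Rightarrow> 'tt \<Rightarrow> bool"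
    and cmp :: "'ws \<Rightarrow> 'wt"
    and \<tau> :: "'ts set \<Rightarrow> 'tt set" and \<sigma> :: "'tt set \<Rightarrow> 'ts set"
  assumes "galois_connection \<tau> \<sigma>"
  shows "TP_tau semS semT cmp \<tau> \<longleftrightarrow> TP_sigma semS semT cmp \<sigma>"
  using TP_tau_imp_TP_sigma[OF assms] TP_sigma_imp_TP_tau[OF assms] by blast

end
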